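(* Let $N,\mu,\beta,\sigma,\gamma,p>0$ and $0<\rho<1$ and consider the system $$S'=\mu N-\tfrac{\beta(1-\rho)}{N}SI-\tfrac{p}{N}S-\mu S,\qquad E'=\tfrac{\beta(1-\rho)}{N}SI-(\sigma+\mu)E,\qquad I'=\sigma E-(\gamma+\mu)I$$ on $\Omega=\{(S,E,I)\in\mathbb{R}_+^3: S+E+I\le N\}$. Then any $\omega$-limit set contained in the interior of $\Omega$ is either a closed orbit or the endemic equilibrium $(S^e,E^e,I^e)$, where $$S^e=\frac{(\sigma+\mu)(\gamma+\mu)N}{\sigma\beta(1-\rho)},\quad I^e=\frac{\mu N\sigma\beta(1-\rho)-(\sigma+\mu)(\gamma+\mu)(p+\mu N)}{(\sigma+\mu)(\gamma+\mu)\beta(1-\rho)},\quad E^e=\frac{\gamma+\mu}{\sigma}I^e.$$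
   Context: The $\omega$-limit set of a solution $x(\cdot)$ is $\{y:\exists t_n\to+\infty,\ x(t_n)\to y\}$. The endemic equilibrium lies in the interior of $\Omega$ exactly when $\mathcal{R}_0=\frac{\mu N\sigma\beta(1-\rho)}{(\sigma+\mu)(\gamma+\mu)(p+\mu N)}>1$. *)

theory Defs
  imports "HOL-Analysis.Analysis"
begin

definition seir_field ::
  "real \<Rightarrow> real \<Rightarrow> real \<Rightarrow> real \<Rightarrow> real \<Rightarrow> real \<Rightarrow> real
   \<Rightarrow> real \<times> real \<times> real \<Rightarrow> real \<times> real \<times> real" where
  "seir_field N \<mu> \<beta> \<sigma> \<gamma> p \<rho> = (\<lambda>(S, E, I).
     (\<mu> * N - \<beta> * (1 - \<rho>) / N * S * I - p / N * S - \<mu> * S,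
      \<beta> * (1 - \<rho>) / N * S * I - (\<sigma> + \<mu>) * E,
      \<sigma> * E - (\<gamma> + \<mu>) * I))"

definition Omega :: "real \<Rightarrow> (real \<times> real \<times> real) set" where
  "Omega N = {(S, E, I). 0 \<le> S \<and> 0 \<le> E \<and> 0 \<le> I \<and> S + E + I \<le> N}"

definition omega_limit :: "(real \<Rightarrow> 'a::topological_space) \<Rightarrow> 'a set" where
  "omega_limit x = {y. \<exists>t :: nat \<Rightarrow> real. filterlim t at_top sequentially \<and>
                          (\<lambda>n. x (t n)) \<longlonglongrightarrow> y}"

definition forward_solution ::
  "('a::real_normed_vector \<Rightarrow> 'a) \<Rightarrow> (real \<Rightarrow> 'a) \<Rightarrow> bool" where
  "forward_solution F x \<longleftrightarrow>
     (\<forall>t\<ge>0. (x has_vector_derivative F (x t)) (at t within {0..}))"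

definition closed_orbit ::
  "('a::real_normed_vector \<Rightarrow> 'a) \<Rightarrow> 'a set \<Rightarrow> bool" where
  "closed_orbit F A \<longleftrightarrow>
     (\<exists>y T. T > 0 \<and> (\<forall>t. (y has_vector_derivative F (y t)) (at t)) \<and>
            (\<forall>t. y (t + T) = y t) \<and> \<not> (\<exists>c. \<forall>t. y t = c) \<and> A = range y)"

end

theory Submission
  imports Defs
begin

(* A solution starting in Omega stays in the compact set Omega, so an omega-limit set inside
   the interior forces S, E and I to be eventually positive.  Along such a solution
   the Volterra-type Lyapunov function
     V = g(S, S^e) + g(E, E^e) + (sigma + mu) / sigma * g(I, I^e),   g(x, a) = x - a - a ln (x / a),
   satisfies V' <= -delta (S - S^e)^2 / S by the AM-GM inequality, so Barbalat's lemma gives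
   S --> S^e; applying Barbalat's lemma to S' and I' then gives I --> I^e and E --> E^e.  Hence
   the omega-limit set is the endemic equilibrium and the closed-orbit alternative never occurs.
   If I^e <= 0 (i.e. R0 <= 1), the function g(S, S0) + E + (sigma + mu) / sigma * I drives the
   solution to the disease-free equilibrium (S0, 0, 0) on the boundary of Omega instead,
   contradicting the hypothesis. *)

section \<open>Positivity up to a first zero\<close>

lemma deriv_nonpos_at_first_zero:
  fixes f :: "real \<Rightarrow> real"
  assumes "(f has_real_derivative D) (at t)" "0 < t" "f t = 0"
    and "\<And>s. 0 \<le> s \<Longrightarrow> s < t \<Longrightarrow> 0 < f s"
  shows "D \<le> 0"
proof (rule ccontr)
  assume "\<not> D \<le> 0"
  then obtain e where e: "0 < e" "\<And>h. 0 < h \<Longrightarrow> h < e \<Longrightarrow> f (t - h) < f t"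
    using has_real_derivative_pos_inc_left[OF assms(1)] by auto
  define h where "h = min (e / 2) t"
  have "f (t - h) < 0" using e assms(2,3) by (auto simp: h_def)
  moreover have "0 < f (t - h)" using e assms(2) by (intro assms(4)) (auto simp: h_def)
  ultimately show False by simp
qed

lemma positive_if_no_first_zero:
  fixes f :: "real \<Rightarrow> real"
  assumes cont: "continuous_on {0..T} f" and f0: "0 < f 0"
    and no_zero: "\<And>t. 0 < t \<Longrightarrow> t \<le> T \<Longrightarrow> f t = 0 \<Longrightarrow>
      (\<And>s. 0 \<le> s \<Longrightarrow> s < t \<Longrightarrow> 0 < f s) \<Longrightarrow> False"
    and t: "t \<in> {0..T}"
  shows "0 < f t"
proof (rule ccontr)
  assume "\<not> 0 < f t"
  define Z where "Z = {s \<in> {0..T}. f s \<le> 0}"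
  have "t \<in> Z" using t \<open>\<not> 0 < f t\<close> by (simp add: Z_def)
  moreover have "closed Z"
    unfolding Z_def by (intro continuous_on_closed_Collect_le cont continuous_on_const) auto
  ultimately have t1: "Inf Z \<in> Z" by (intro closed_contains_Inf) (auto simp: Z_def bdd_below_def)
  have before: "0 < f s" if "0 \<le> s" "s < Inf Z" for s
    using that cInf_lower[of s Z] t1 by (force simp: Z_def bdd_below_def)
  have "0 < Inf Z" using t1 f0 by (auto simp: Z_def order.order_iff_strict)
  have "f (Inf Z) = 0"
  proof (rule ccontr)
    assume "f (Inf Z) \<noteq> 0"
    then have "f (Inf Z) < 0" using t1 by (simp add: Z_def)
    then obtain z where z: "0 \<le> z" "z \<le> Inf Z" "f z = 0"
      using IVT2'[of f "Inf Z" 0 0] f0 t1 continuous_on_subset[OF cont] by (force simp: Z_def)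
    then show False using before[of z] \<open>f (Inf Z) < 0\<close> by (cases "z = Inf Z") auto
  qed
  then show False using no_zero[OF \<open>0 < Inf Z\<close> _ _ before] t1 by (simp add: Z_def)
qed

lemma mult_ge_neg_bound:
  fixes a b g B :: real
  assumes "- g \<le> a" "- g \<le> b" "\<bar>a\<bar> \<le> B" "\<bar>b\<bar> \<le> B" "0 \<le> g"
  shows "- (B * g) \<le> a * b"
proof -
  have "0 \<le> B" using assms(3) by linarith
  consider "0 \<le> a" "0 \<le> b" | "a < 0" "b < 0" | "0 \<le> a" "b < 0" | "a < 0" "0 \<le> b" by linarith
  then show ?thesis
  proof cases
    case 3
    have "a * - g \<le> a * b" using 3 assms by (intro mult_left_mono) auto
    moreover have "B * - g \<le> a * - g" using 3 assms by (intro mult_right_mono_neg) auto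
    ultimately show ?thesis by simp
  next
    case 4
    have "- g * b \<le> a * b" using 4 assms by (intro mult_right_mono) auto
    moreover have "- g * B \<le> - g * b" using 4 assms by (intro mult_left_mono_neg) auto
    ultimately show ?thesis by (simp add: mult.commute)
  qed (use \<open>0 \<le> B\<close> assms(5) in \<open>smt (verit) mult_nonneg_nonneg mult_nonpos_nonpos\<close>)+
qed

section \<open>Barbalat's lemma\<close>

lemma antimono_bdd_below_tendsto:
  fixes V :: "real \<Rightarrow> real"
  assumes mono: "\<And>s t. T \<le> s \<Longrightarrow> s \<le> t \<Longrightarrow> V t \<le> V s"
    and bdd: "\<And>t. T \<le> t \<Longrightarrow> B \<le> V t"
  shows "(V \<longlongrightarrow> (INF t\<in>{T..}. V t)) at_top"
proof (rule order_tendstoI)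
  have bdd': "bdd_below (V ` {T..})" using bdd by (auto simp: bdd_below_def)
  fix y assume "(INF t\<in>{T..}. V t) < y"
  then obtain t1 where t1: "T \<le> t1" "V t1 < y" by (auto simp: cINF_less_iff[OF _ bdd'])
  then show "\<forall>\<^sub>F t in at_top. V t < y"
    unfolding eventually_at_top_linorder using mono by (meson order.strict_trans1 order_trans)
next
  have bdd': "bdd_below (V ` {T..})" using bdd by (auto simp: bdd_below_def)
  fix y assume "y < (INF t\<in>{T..}. V t)"
  then show "\<forall>\<^sub>F t in at_top. y < V t"
    unfolding eventually_at_top_linorder using cINF_lower[OF bdd'] by (meson atLeast_iff order.strict_trans2)
qed

lemma eventually_at_top_positive_time:
  fixes P :: "real \<Rightarrow> bool"
  assumes "\<forall>\<^sub>F t in at_top. P t"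
  obtains T where "0 < T" "\<And>t. T \<le> t \<Longrightarrow> P t"
proof -
  obtain T0 where "\<And>t. T0 \<le> t \<Longrightarrow> P t" using assms unfolding eventually_at_top_linorder by blast
  then show thesis using that[of "max T0 1"] by simp
qed

lemma barbalat_one_sided:
  fixes G G' h h' :: "real \<Rightarrow> real"
  assumes G: "\<And>t. T \<le> t \<Longrightarrow> (G has_real_derivative G' t) (at t)"
    and h_le: "\<And>t. T \<le> t \<Longrightarrow> h t \<le> G' t"
    and h: "\<And>t. T \<le> t \<Longrightarrow> (h has_real_derivative h' t) (at t)"
    and h'_bound: "\<And>t. T \<le> t \<Longrightarrow> \<bar>h' t\<bar> \<le> M"
    and lim: "(G \<longlongrightarrow> L) at_top" and "0 < \<eta>"
  shows "\<forall>\<^sub>F t in at_top. h t < \<eta>"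
proof -
  define l where "l = \<eta> / (2 * (\<bar>M\<bar> + 1))"
  have l: "0 < l" "M * l \<le> \<eta> / 2"
    using \<open>0 < \<eta>\<close> by (auto simp: l_def field_simps abs_if)
  have "\<forall>\<^sub>F t in at_top. dist (G t) L < l * \<eta> / 4"
    using tendstoD[OF lim] l \<open>0 < \<eta>\<close> by (meson divide_pos_pos mult_pos_pos zero_less_numeral)
  then obtain T1 where T1: "\<And>t. T1 \<le> t \<Longrightarrow> \<bar>G t - L\<bar> < l * \<eta> / 4"
    by (auto simp: eventually_at_top_linorder dist_real_def)
  have "h t < \<eta>" if t: "max T T1 \<le> t" for t
  proof (rule ccontr)
    assume "\<not> h t < \<eta>"
    obtain z where z: "t < z" "z < t + l" "G (t + l) - G t = l * G' z"
      using MVT2[of t "t + l" G G'] G t l by force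
    have "\<bar>h z - h t\<bar> \<le> M * \<bar>z - t\<bar>"
      using field_differentiable_bound[of "{T..}" h h' M z t] h h'_bound t z
      by (auto simp: has_field_derivative_at_within)
    also have "\<dots> \<le> M * l"
      using z h'_bound[of t] t by (intro mult_left_mono) (auto intro: order_trans[OF abs_ge_zero])
    finally have "\<eta> / 2 \<le> G' z"
      using h_le[of z] l z t \<open>\<not> h t < \<eta>\<close> by auto
    then have "l * \<eta> / 2 \<le> G (t + l) - G t" using z(3) l mult_left_mono by fastforce
    moreover have "\<bar>G (t + l) - L\<bar> < l * \<eta> / 4" "\<bar>G t - L\<bar> < l * \<eta> / 4"
      using T1 t l by auto
    ultimately show False by linarith
  qed
  then show ?thesis unfolding eventually_at_top_linorder by blast
qed

lemma barbalat:
  fixes f f' f'' :: "real \<Rightarrow> real"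
  assumes f: "\<And>t. T \<le> t \<Longrightarrow> (f has_real_derivative f' t) (at t)"
    and f': "\<And>t. T \<le> t \<Longrightarrow> (f' has_real_derivative f'' t) (at t)"
    and f''_bound: "\<And>t. T \<le> t \<Longrightarrow> \<bar>f'' t\<bar> \<le> M"
    and lim: "(f \<longlongrightarrow> L) at_top"
  shows "(f' \<longlongrightarrow> 0) at_top"
proof (rule order_tendstoI)
  fix \<eta> :: real assume "0 < \<eta>"
  show "\<forall>\<^sub>F t in at_top. f' t < \<eta>"
    by (rule barbalat_one_sided[OF f order.refl f' f''_bound lim \<open>0 < \<eta>\<close>])
next
  fix \<eta> :: real assume "\<eta> < 0"
  have "\<forall>\<^sub>F t in at_top. - f' t < - \<eta>"
    using \<open>\<eta> < 0\<close> f''_bound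
    by (intro barbalat_one_sided[where G = "\<lambda>t. - f t" and G' = "\<lambda>t. - f' t" and h' = "\<lambda>t. - f'' t"
          and T = T and M = M and L = "- L"])
       (auto intro: DERIV_minus f f' tendsto_minus lim)
  then show "\<forall>\<^sub>F t in at_top. \<eta> < f' t" by simp
qed

section \<open>Omega-limit sets\<close>

lemma omega_limit_tendsto:
  fixes x :: "real \<Rightarrow> 'a::metric_space"
  assumes "(x \<longlongrightarrow> y) at_top"
  shows "omega_limit x = {y}"
proof
  show "omega_limit x \<subseteq> {y}"
  proof
    fix z assume "z \<in> omega_limit x"
    then obtain t :: "nat \<Rightarrow> real" where "filterlim t at_top sequentially" "(\<lambda>n. x (t n)) \<longlonglongrightarrow> z"
      unfolding omega_limit_def by blast
    then show "z \<in> {y}" using filterlim_compose[OF assms] LIMSEQ_unique by blast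
  qed
  show "{y} \<subseteq> omega_limit x"
    using filterlim_compose[OF assms filterlim_real_sequentially] filterlim_real_sequentially
    unfolding omega_limit_def by blast
qed

lemma eventually_in_open_if_omega_limit_subset:
  fixes x :: "real \<Rightarrow> 'a::metric_space"
  assumes K: "compact K" "\<And>t. 0 \<le> t \<Longrightarrow> x t \<in> K"
    and U: "open U" "omega_limit x \<subseteq> U"
  shows "\<forall>\<^sub>F t in at_top. x t \<in> U"
proof (rule ccontr)
  assume "\<not> (\<forall>\<^sub>F t in at_top. x t \<in> U)"
  then have "\<exists>t\<ge>real n. x t \<notin> U" for n
    unfolding eventually_at_top_linorder by blast
  then obtain t where t: "\<And>n. real n \<le> t n" "\<And>n. x (t n) \<notin> U" by metis
  have "compact (K - U)" using K U by (simp add: compact_diff)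
  moreover have "\<forall>n. x (t n) \<in> K - U" using K(2) t by (metis DiffI of_nat_0_le_iff order_trans)
  ultimately obtain y r where y: "y \<in> K - U" "strict_mono r" "(\<lambda>n. x (t (r n))) \<longlonglongrightarrow> y"
    using seq_compactE[OF compact_imp_seq_compact, of "K - U" "\<lambda>n. x (t n)"] by (auto simp: o_def)
  have "filterlim (\<lambda>n. t (r n)) at_top sequentially"
    using seq_suble[OF y(2)] t(1)
    by (intro filterlim_at_top_mono[OF filterlim_real_sequentially] always_eventually)
       (meson of_nat_le_iff order_trans)
  then have "y \<in> omega_limit x" using y(3) unfolding omega_limit_def by blast
  then show False using y(1) U by blast
qed

lemma compact_Omega: "compact (Omega N)"
proof -
  have "Omega N = ({0..N} \<times> {0..N} \<times> {0..N}) \<inter> {z. fst z + fst (snd z) + snd (snd z) \<le> N}"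
    by (auto simp: Omega_def)
  moreover have "closed {z :: real \<times> real \<times> real. fst z + fst (snd z) + snd (snd z) \<le> N}"
    by (intro closed_Collect_le continuous_intros)
  ultimately show ?thesis by (simp add: compact_Int_closed compact_Times)
qed

lemma interior_Omega_positive:
  assumes "(S, E, I) \<in> interior (Omega N)"
  shows "0 < S \<and> 0 < E \<and> 0 < I"
proof -
  have "interior (Omega N) \<subseteq> interior ({0..} \<times> {0..} \<times> {0..})"
    by (rule interior_mono) (auto simp: Omega_def)
  also have "\<dots> = {0<..} \<times> {0<..} \<times> {0<..}" by (simp add: interior_Times)
  finally show ?thesis using assms by auto
qed

section \<open>Volterra-type Lyapunov functions\<close>

lemma sum_ge_3_if_prod_eq_1:
  fixes a b c :: real
  assumes "0 < a" "0 < b" "0 < c" "a * b * c = 1"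
  shows "3 \<le> a + b + c"
proof -
  have "ln a + ln b + ln c = ln (a * b * c)" using assms(1-3) by (simp add: ln_mult)
  then have "ln a + ln b + ln c = 0" using assms(4) by simp
  then show ?thesis using ln_le_minus_one[of a] ln_le_minus_one[of b] ln_le_minus_one[of c] assms
    by linarith
qed

definition volterra :: "real \<Rightarrow> real \<Rightarrow> real" where
  "volterra a x = x - a - a * ln (x / a)"

lemma volterra_nonneg:
  assumes "0 < a" "0 < x"
  shows "0 \<le> volterra a x"
proof -
  have "a * ln (x / a) \<le> a * (x / a - 1)"
    using assms ln_le_minus_one[of "x / a"] by (intro mult_left_mono) auto
  also have "\<dots> = x - a" using assms by (simp add: field_simps)
  finally show ?thesis by (simp add: volterra_def)
qed

lemma has_real_derivative_volterra:
  assumes "(f has_real_derivative f') (at t)" "0 < f t" "0 < a"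
  shows "((\<lambda>t. volterra a (f t)) has_real_derivative (1 - a / f t) * f') (at t)"
  unfolding volterra_def using assms
  by (auto intro!: derivative_eq_intros simp: field_simps)

lemma endemic_lyapunov_derivative_le:
  fixes S E I Sc Ec Ic \<Lambda> k \<delta> c d \<sigma> :: real
  assumes pos: "0 < S" "0 < E" "0 < I" "0 < Sc" "0 < Ec" "0 < Ic" "0 < \<sigma>" "0 < k"
    and eq: "\<Lambda> = k * Sc * Ic + \<delta> * Sc" "c * Ec = k * Sc * Ic" "\<sigma> * Ec = d * Ic"
  shows "(1 - Sc / S) * (\<Lambda> - k * S * I - \<delta> * S) + (1 - Ec / E) * (k * S * I - c * E)
           + c / \<sigma> * ((1 - Ic / I) * (\<sigma> * E - d * I))
         \<le> - \<delta> * (S - Sc)\<^sup>2 / S"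
proof -
  have d: "d = \<sigma> * Ec / Ic" and c: "c = k * Sc * Ic / Ec" using eq pos by (simp_all add: field_simps)
  have "(1 - Sc / S) * (\<Lambda> - k * S * I - \<delta> * S) + (1 - Ec / E) * (k * S * I - c * E)
           + c / \<sigma> * ((1 - Ic / I) * (\<sigma> * E - d * I))
         = - \<delta> * (S - Sc)\<^sup>2 / S
           + k * Sc * Ic * (3 - (Sc / S + S * I * Ec / (Sc * Ic * E) + E * Ic / (Ec * I)))"
    unfolding eq(1) d c using pos by (simp add: field_simps power2_eq_square)
  moreover have "3 \<le> Sc / S + S * I * Ec / (Sc * Ic * E) + E * Ic / (Ec * I)"
    using pos by (intro sum_ge_3_if_prod_eq_1) simp_all
  then have "k * Sc * Ic * (3 - (Sc / S + S * I * Ec / (Sc * Ic * E) + E * Ic / (Ec * I))) \<le> 0"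
    using pos by (intro mult_nonneg_nonpos) auto
  ultimately show ?thesis by linarith
qed

lemma disease_free_lyapunov_derivative_le:
  fixes S E I S0 \<Lambda> k \<delta> c d \<sigma> :: real
  assumes "0 < S" "0 \<le> I" "0 < \<sigma>" "0 < k" "\<Lambda> = \<delta> * S0" "S0 \<le> c * d / (\<sigma> * k)"
  shows "(1 - S0 / S) * (\<Lambda> - k * S * I - \<delta> * S) + (k * S * I - c * E) + c / \<sigma> * (\<sigma> * E - d * I)
         \<le> - \<delta> * (S - S0)\<^sup>2 / S"
proof -
  have "(1 - S0 / S) * (\<Lambda> - k * S * I - \<delta> * S) + (k * S * I - c * E) + c / \<sigma> * (\<sigma> * E - d * I)
        = - \<delta> * (S - S0)\<^sup>2 / S + k * I * (S0 - c * d / (\<sigma> * k))"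
    unfolding \<open>\<Lambda> = \<delta> * S0\<close> using assms(1,3,4) by (simp add: field_simps power2_eq_square)
  moreover have "k * I * (S0 - c * d / (\<sigma> * k)) \<le> 0"
    using assms by (simp add: mult_nonneg_nonpos)
  ultimately show ?thesis by linarith
qed

section \<open>Solutions of the SEIR system\<close>

locale seir_solution =
  fixes S E I :: "real \<Rightarrow> real" and \<Lambda> k \<delta> c d \<sigma> \<mu> N :: real
  assumes pos: "0 < \<Lambda>" "0 < k" "0 < \<delta>" "0 < c" "0 < d" "0 < \<sigma>" "0 < \<mu>"
    and rates: "\<mu> \<le> \<delta>" "\<sigma> + \<mu> \<le> c" "\<mu> \<le> d" "\<Lambda> \<le> \<mu> * N"
    and deriv_S: "\<And>t. 0 \<le> t \<Longrightarrow>
      (S has_real_derivative \<Lambda> - k * S t * I t - \<delta> * S t) (at t within {0..})"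
    and deriv_E: "\<And>t. 0 \<le> t \<Longrightarrow>
      (E has_real_derivative k * S t * I t - c * E t) (at t within {0..})"
    and deriv_I: "\<And>t. 0 \<le> t \<Longrightarrow>
      (I has_real_derivative \<sigma> * E t - d * I t) (at t within {0..})"
    and initial: "(S 0, E 0, I 0) \<in> Omega N"
begin

lemma N_pos: "0 < N"
  using pos(1,7) rates(4) by (meson less_le_trans zero_less_mult_pos)

lemma continuous_on_S: "continuous_on {0..} S"
  and continuous_on_E: "continuous_on {0..} E"
  and continuous_on_I: "continuous_on {0..} I"
  unfolding continuous_on_eq_continuous_within
  by (auto intro: DERIV_continuous deriv_S deriv_E deriv_I)

lemma deriv_S_at: "0 < t \<Longrightarrow> (S has_real_derivative \<Lambda> - k * S t * I t - \<delta> * S t) (at t)"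
  and deriv_E_at: "0 < t \<Longrightarrow> (E has_real_derivative k * S t * I t - c * E t) (at t)"
  and deriv_I_at: "0 < t \<Longrightarrow> (I has_real_derivative \<sigma> * E t - d * I t) (at t)"
  using deriv_S[of t] deriv_E[of t] deriv_I[of t] at_within_interior[of t "{0..}"] by auto

(* E and I may vanish together with zero speed, so the components are shifted by a positive g that
   grows faster than the coupling terms; the equations then force a positive derivative at a
   first zero of a shifted component. *)
lemma perturbed_solution_has_no_first_zero:
  fixes g :: "real \<Rightarrow> real"
  assumes g_pos: "\<And>s. 0 < g s" and g_deriv: "\<And>s. (g has_real_derivative L * g s) (at s)"
    and L: "k * B + \<sigma> < L" and "0 < t" and bound: "\<bar>S t\<bar> \<le> B" "\<bar>I t\<bar> \<le> B"
    and zero: "min (S t + g t) (min (E t + g t) (I t + g t)) = 0"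
    and before: "\<And>s. 0 \<le> s \<Longrightarrow> s < t \<Longrightarrow> 0 < min (S s + g s) (min (E s + g s) (I s + g s))"
  shows False
proof -
  have lower: "- g t \<le> S t" "- g t \<le> E t" "- g t \<le> I t" using zero by auto
  have "0 \<le> B" using bound by linarith
  have "k * - (B * g t) \<le> k * (S t * I t)"
    using mult_ge_neg_bound[OF lower(1,3) bound less_imp_le[OF g_pos]] pos by (intro mult_left_mono) auto
  then have SI: "- (k * B * g t) \<le> k * S t * I t" by (simp add: algebra_simps)
  have "k * - B \<le> k * I t" using bound pos by (intro mult_left_mono) auto
  then have kI: "- (k * B) \<le> k * I t" by simp
  have first_zero: "D \<le> 0"
    if "((\<lambda>s. F s + g s) has_real_derivative D) (at t)" "F t + g t = 0"
      and "\<And>s. 0 \<le> s \<Longrightarrow> s < t \<Longrightarrow> 0 < F s + g s" for F D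
    using deriv_nonpos_at_first_zero that \<open>0 < t\<close> by blast
  consider "S t + g t = 0" | "E t + g t = 0" | "I t + g t = 0" using zero by linarith
  then show False
  proof cases
    case 1
    have "\<Lambda> - k * S t * I t - \<delta> * S t + L * g t \<le> 0"
      using first_zero[OF DERIV_add[OF deriv_S_at[OF \<open>0 < t\<close>] g_deriv] 1] before by force
    moreover have "\<Lambda> - k * S t * I t - \<delta> * S t + L * g t = \<Lambda> + (k * I t + \<delta> + L) * g t"
      using 1 by (simp add: algebra_simps eq_neg_iff_add_eq_0[symmetric])
    moreover have "0 < (k * I t + \<delta> + L) * g t" using kI L pos g_pos by simp
    ultimately show False using pos by linarith
  next
    case 2
    have "k * S t * I t - c * E t + L * g t \<le> 0"
      using first_zero[OF DERIV_add[OF deriv_E_at[OF \<open>0 < t\<close>] g_deriv] 2] before by force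
    moreover have "k * S t * I t - c * E t + L * g t = k * S t * I t + (c + L) * g t"
      using 2 by (simp add: algebra_simps eq_neg_iff_add_eq_0[symmetric])
    moreover have "k * B * g t < (c + L) * g t" using L pos g_pos by simp
    ultimately show False using SI by linarith
  next
    case 3
    have "\<sigma> * E t - d * I t + L * g t \<le> 0"
      using first_zero[OF DERIV_add[OF deriv_I_at[OF \<open>0 < t\<close>] g_deriv] 3] before by force
    moreover have "\<sigma> * E t - d * I t + L * g t = \<sigma> * (E t + g t) + (d + L - \<sigma>) * g t"
      using 3 by (simp add: algebra_simps eq_neg_iff_add_eq_0[symmetric])
    moreover have "0 \<le> \<sigma> * (E t + g t)" using lower pos by simp
    moreover have "0 < (d + L - \<sigma>) * g t"
      using L pos g_pos \<open>0 \<le> B\<close> mult_nonneg_nonneg[of k B] by (intro mult_pos_pos) linarith+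
    ultimately show False by linarith
  qed
qed

lemma S_E_I_nonneg:
  assumes "0 \<le> T"
  shows "0 \<le> S T \<and> 0 \<le> E T \<and> 0 \<le> I T"
proof -
  have "bounded ((\<lambda>t. (S t, I t)) ` {0..T})"
    using continuous_on_S continuous_on_I
    by (intro compact_imp_bounded compact_continuous_image continuous_on_Pair compact_Icc)
       (auto elim: continuous_on_subset)
  then obtain B where "\<forall>z \<in> (\<lambda>t. (S t, I t)) ` {0..T}. norm z \<le> B"
    unfolding bounded_iff by blast
  then have B: "\<bar>S t\<bar> \<le> B \<and> \<bar>I t\<bar> \<le> B" if "t \<in> {0..T}" for t
    using that norm_fst_le[where x = "S t" and y = "I t"] norm_snd_le[where x = "S t" and y = "I t"]
    unfolding real_norm_def by (smt (verit) image_eqI)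
  have "- \<epsilon> < S T \<and> - \<epsilon> < E T \<and> - \<epsilon> < I T" if "0 < \<epsilon>" for \<epsilon>
  proof -
    define g where "g t = \<epsilon> * exp ((k * B + \<sigma> + 1) * (t - T))" for t
    define m where "m t = min (S t + g t) (min (E t + g t) (I t + g t))" for t
    have "0 < m T"
    proof (rule positive_if_no_first_zero[where f = m and T = T])
      show "continuous_on {0..T} m"
        unfolding m_def g_def using continuous_on_S continuous_on_E continuous_on_I
        by (intro continuous_intros) (auto elim: continuous_on_subset)
      show "0 < m 0" using initial \<open>0 < \<epsilon>\<close> by (auto simp: m_def g_def Omega_def add_nonneg_pos)
    next
      fix t assume "0 < t" "t \<le> T" "m t = 0" "\<And>s. 0 \<le> s \<Longrightarrow> s < t \<Longrightarrow> 0 < m s"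
      then show False
        using B[of t] \<open>0 < \<epsilon>\<close> unfolding m_def g_def
        by (intro perturbed_solution_has_no_first_zero[where L = "k * B + \<sigma> + 1"])
           (auto intro!: derivative_eq_intros)
    qed (use \<open>0 \<le> T\<close> in auto)
    then show ?thesis by (simp add: m_def g_def)
  qed
  from this[of "- S T"] this[of "- E T"] this[of "- I T"] show ?thesis by force
qed

lemma solution_in_Omega:
  assumes "0 \<le> t"
  shows "(S t, E t, I t) \<in> Omega N"
proof -
  define W where "W s = (S s + E s + I s - N) * exp (\<mu> * s)" for s
  have "W t \<le> W 0"
  proof (rule DERIV_nonpos_imp_decreasing_open[OF assms])
    show "continuous_on {0..t} W"
      unfolding W_def using continuous_on_S continuous_on_E continuous_on_I
      by (intro continuous_intros) (auto elim: continuous_on_subset)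
    fix s :: real assume "0 < s" "s < t"
    have "(W has_real_derivative
        (\<Lambda> - \<mu> * N - (\<delta> - \<mu>) * S s - (c - \<sigma> - \<mu>) * E s - (d - \<mu>) * I s) * exp (\<mu> * s)) (at s)"
      unfolding W_def
      by (rule derivative_eq_intros deriv_S_at deriv_E_at deriv_I_at \<open>0 < s\<close> refl)+
         (simp add: algebra_simps)
    moreover have "\<Lambda> - \<mu> * N - (\<delta> - \<mu>) * S s - (c - \<sigma> - \<mu>) * E s - (d - \<mu>) * I s \<le> 0"
      using S_E_I_nonneg[of s] \<open>0 < s\<close> rates mult_nonneg_nonneg[of "\<delta> - \<mu>" "S s"]
        mult_nonneg_nonneg[of "c - \<sigma> - \<mu>" "E s"] mult_nonneg_nonneg[of "d - \<mu>" "I s"]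
      by linarith
    ultimately show "\<exists>D. (W has_real_derivative D) (at s) \<and> D \<le> 0"
      by (blast intro: mult_nonpos_nonneg less_imp_le[OF exp_gt_zero])
  qed
  also have "W 0 \<le> 0" using initial by (simp add: W_def Omega_def)
  finally have "S t + E t + I t \<le> N" by (simp add: W_def mult_le_0_iff)
  then show ?thesis using S_E_I_nonneg[OF assms] by (simp add: Omega_def)
qed

lemma bounded_along_solution:
  fixes P :: "real \<times> real \<times> real \<Rightarrow> real"
  assumes "continuous_on (Omega N) P"
  obtains M where "\<And>t. 0 \<le> t \<Longrightarrow> \<bar>P (S t, E t, I t)\<bar> \<le> M"
proof -
  have "bounded (P ` Omega N)"
    by (intro compact_imp_bounded compact_continuous_image assms compact_Omega)
  then obtain M where "\<forall>y \<in> P ` Omega N. norm y \<le> M" unfolding bounded_iff by blast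
  then show ?thesis using that solution_in_Omega by fastforce
qed

lemma eventually_positive_if_omega_limit_in_interior:
  assumes "omega_limit (\<lambda>t. (S t, E t, I t)) \<subseteq> interior (Omega N)"
  shows "\<forall>\<^sub>F t in at_top. 0 < S t \<and> 0 < E t \<and> 0 < I t"
proof -
  have "\<forall>\<^sub>F t in at_top. (S t, E t, I t) \<in> interior (Omega N)"
    using solution_in_Omega
    by (intro eventually_in_open_if_omega_limit_subset[OF compact_Omega _ open_interior assms])
  then show ?thesis by eventually_elim (rule interior_Omega_positive)
qed

(* h = delta / N * (S - Sc)^2 bounds -V' from below and has a bounded derivative, so Barbalat's
   lemma applied to the convergent function -V forces h to 0. *)
lemma S_tendsto_if_lyapunov:
  fixes V V' :: "real \<Rightarrow> real"
  assumes "0 < T"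
    and S_pos: "\<And>t. T \<le> t \<Longrightarrow> 0 < S t"
    and V: "\<And>t. T \<le> t \<Longrightarrow> (V has_real_derivative V' t) (at t)"
    and V'_le: "\<And>t. T \<le> t \<Longrightarrow> V' t \<le> - \<delta> * (S t - Sc)\<^sup>2 / S t"
    and V_nonneg: "\<And>t. T \<le> t \<Longrightarrow> 0 \<le> V t"
  shows "(S \<longlongrightarrow> Sc) at_top"
proof -
  define h where "h t = \<delta> / N * (S t - Sc)\<^sup>2" for t
  have h_le: "h t \<le> - V' t" if "T \<le> t" for t
  proof -
    have "(S t - Sc)\<^sup>2 / N \<le> (S t - Sc)\<^sup>2 / S t"
      using S_pos[OF that] solution_in_Omega[of t] \<open>0 < T\<close> that by (intro divide_left_mono) (auto simp: Omega_def)
    then show ?thesis using V'_le[OF that] pos(3) mult_left_mono[of _ _ \<delta>] by (fastforce simp: h_def)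
  qed
  have h_nonneg: "0 \<le> h t" for t using N_pos pos(3) by (simp add: h_def)
  have V_antimono: "V t \<le> V s" if "T \<le> s" "s \<le> t" for s t
  proof (rule DERIV_nonpos_imp_nonincreasing[OF that(2)])
    fix x assume "s \<le> x" "x \<le> t"
    then have "T \<le> x" using that by linarith
    then show "\<exists>y. (V has_real_derivative y) (at x) \<and> y \<le> 0"
      using V[of x] h_le[of x] h_nonneg[of x] by (intro exI[of _ "V' x"]) auto
  qed
  have lim: "((\<lambda>t. - V t) \<longlongrightarrow> - (INF t\<in>{T..}. V t)) at_top"
    using antimono_bdd_below_tendsto[of T V 0] V_antimono V_nonneg by (intro tendsto_minus) auto
  define h' where "h' t = \<delta> / N * (2 * (S t - Sc) * (\<Lambda> - k * S t * I t - \<delta> * S t))" for t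
  have h: "(h has_real_derivative h' t) (at t)" if "T \<le> t" for t
    unfolding h_def h'_def using \<open>0 < T\<close> that N_pos
    by (auto intro!: derivative_eq_intros deriv_S_at simp: field_simps power2_eq_square)
  have "continuous_on (Omega N)
      (\<lambda>z. \<delta> / N * (2 * (fst z - Sc) * (\<Lambda> - k * fst z * snd (snd z) - \<delta> * fst z)))"
    by (intro continuous_intros)
  then obtain M where M: "\<And>t. 0 \<le> t \<Longrightarrow> \<bar>h' t\<bar> \<le> M"
    by (rule bounded_along_solution) (auto simp: h'_def)
  show ?thesis
  proof (rule tendstoI)
    fix e :: real assume "0 < e"
    then have "\<forall>\<^sub>F t in at_top. h t < \<delta> / N * e\<^sup>2"
      using N_pos pos(3) \<open>0 < T\<close>
      by (intro barbalat_one_sided[where T = T and G' = "\<lambda>t. - V' t", OF _ _ h _ lim])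
         (auto intro: V DERIV_minus h_le M)
    then show "\<forall>\<^sub>F t in at_top. dist (S t) Sc < e"
    proof eventually_elim
      case (elim t)
      then have "\<delta> / N * (S t - Sc)\<^sup>2 < \<delta> / N * e\<^sup>2" by (simp only: h_def)
      then have "\<bar>S t - Sc\<bar>\<^sup>2 < e\<^sup>2"
        using N_pos pos(3) by (metis divide_pos_pos mult_less_cancel_left_pos power2_abs)
      then show ?case using \<open>0 < e\<close> power2_less_imp_less by (fastforce simp: dist_real_def)
    qed
  qed
qed

lemma I_tendsto_if_S_tendsto:
  assumes "0 < Sc" and S_lim: "(S \<longlongrightarrow> Sc) at_top"
  shows "(I \<longlongrightarrow> (\<Lambda> - \<delta> * Sc) / (k * Sc)) at_top"
proof -
  define S' where "S' t = \<Lambda> - k * S t * I t - \<delta> * S t" for t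
  define S'' where "S'' t = - k * (S' t * I t + S t * (\<sigma> * E t - d * I t)) - \<delta> * S' t" for t
  have S: "(S has_real_derivative S' t) (at t)" if "1 \<le> t" for t
    unfolding S'_def using deriv_S_at that by simp
  have S': "(S' has_real_derivative S'' t) (at t)" if "1 \<le> t" for t
    unfolding S'_def S''_def using that
    by (auto intro!: derivative_eq_intros deriv_S_at deriv_I_at simp: S'_def algebra_simps)
  have "continuous_on (Omega N)
      (\<lambda>z. - k * ((\<Lambda> - k * fst z * snd (snd z) - \<delta> * fst z) * snd (snd z)
                  + fst z * (\<sigma> * fst (snd z) - d * snd (snd z)))
           - \<delta> * (\<Lambda> - k * fst z * snd (snd z) - \<delta> * fst z))"
    by (intro continuous_intros)
  then obtain M where M: "\<And>t. 0 \<le> t \<Longrightarrow> \<bar>S'' t\<bar> \<le> M"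
    by (rule bounded_along_solution) (auto simp: S''_def S'_def)
  have "(S' \<longlongrightarrow> 0) at_top" using M by (intro barbalat[OF S S' _ S_lim, where M = M]) auto
  then have "((\<lambda>t. (\<Lambda> - \<delta> * S t - S' t) / (k * S t)) \<longlongrightarrow> (\<Lambda> - \<delta> * Sc - 0) / (k * Sc)) at_top"
    using \<open>0 < Sc\<close> pos by (intro tendsto_intros S_lim) auto
  moreover have "\<forall>\<^sub>F t in at_top. (\<Lambda> - \<delta> * S t - S' t) / (k * S t) = I t"
    using order_tendstoD(1)[OF S_lim \<open>0 < Sc\<close>]
    by eventually_elim (use pos in \<open>simp add: S'_def field_simps\<close>)
  ultimately show ?thesis by (simp add: tendsto_cong)
qed

lemma E_tendsto_if_I_tendsto:
  assumes I_lim: "(I \<longlongrightarrow> Ic) at_top"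
  shows "(E \<longlongrightarrow> d * Ic / \<sigma>) at_top"
proof -
  define I' where "I' t = \<sigma> * E t - d * I t" for t
  define I'' where "I'' t = \<sigma> * (k * S t * I t - c * E t) - d * I' t" for t
  have I: "(I has_real_derivative I' t) (at t)" if "1 \<le> t" for t
    unfolding I'_def using deriv_I_at that by simp
  have I': "(I' has_real_derivative I'' t) (at t)" if "1 \<le> t" for t
    unfolding I'_def I''_def using that
    by (auto intro!: derivative_eq_intros deriv_E_at deriv_I_at)
  have "continuous_on (Omega N) (\<lambda>z. \<sigma> * (k * fst z * snd (snd z) - c * fst (snd z))
      - d * (\<sigma> * fst (snd z) - d * snd (snd z)))"
    by (intro continuous_intros)
  then obtain M where M: "\<And>t. 0 \<le> t \<Longrightarrow> \<bar>I'' t\<bar> \<le> M"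
    by (rule bounded_along_solution) (auto simp: I''_def I'_def)
  have "(I' \<longlongrightarrow> 0) at_top" using M by (intro barbalat[OF I I' _ I_lim, where M = M]) auto
  then have "((\<lambda>t. (I' t + d * I t) / \<sigma>) \<longlongrightarrow> (0 + d * Ic) / \<sigma>) at_top"
    using pos by (intro tendsto_intros I_lim) auto
  moreover have "(I' t + d * I t) / \<sigma> = E t" for t using pos by (simp add: I'_def)
  ultimately show ?thesis by simp
qed

definition "endemic_S = c * d / (\<sigma> * k)"
definition "endemic_I = (\<Lambda> - \<delta> * endemic_S) / (k * endemic_S)"
definition "endemic_E = d * endemic_I / \<sigma>"

lemma endemic_S_pos: "0 < endemic_S"
  using pos by (simp add: endemic_S_def)

lemma tendsto_endemic_equilibrium:
  assumes "0 < endemic_I" and "\<forall>\<^sub>F t in at_top. 0 < S t \<and> 0 < E t \<and> 0 < I t"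
  shows "((\<lambda>t. (S t, E t, I t)) \<longlongrightarrow> (endemic_S, endemic_E, endemic_I)) at_top"
proof -
  obtain T where "0 < T" and T: "\<And>t. T \<le> t \<Longrightarrow> 0 < S t \<and> 0 < E t \<and> 0 < I t"
    using eventually_at_top_positive_time[OF assms(2)] by blast
  have "0 < endemic_E" using assms(1) pos by (simp add: endemic_E_def)
  have eqs: "\<Lambda> = k * endemic_S * endemic_I + \<delta> * endemic_S" "c * endemic_E = k * endemic_S * endemic_I"
      "\<sigma> * endemic_E = d * endemic_I"
    using pos endemic_S_pos by (simp_all add: endemic_I_def endemic_E_def endemic_S_def field_simps)
  define V where "V t = volterra endemic_S (S t) + volterra endemic_E (E t) + c / \<sigma> * volterra endemic_I (I t)" for t
  define V' where "V' t = (1 - endemic_S / S t) * (\<Lambda> - k * S t * I t - \<delta> * S t)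
      + (1 - endemic_E / E t) * (k * S t * I t - c * E t)
      + c / \<sigma> * ((1 - endemic_I / I t) * (\<sigma> * E t - d * I t))" for t
  have "(S \<longlongrightarrow> endemic_S) at_top"
  proof (rule S_tendsto_if_lyapunov[OF \<open>0 < T\<close>])
    fix t assume "T \<le> t"
    with T \<open>0 < T\<close> have t: "0 < t" "0 < S t" "0 < E t" "0 < I t" by auto
    show "0 < S t" using t by simp
    show "(V has_real_derivative V' t) (at t)"
      unfolding V_def V'_def using t endemic_S_pos \<open>0 < endemic_E\<close> assms(1)
      by (intro DERIV_add DERIV_cmult has_real_derivative_volterra deriv_S_at deriv_E_at deriv_I_at)
    show "V' t \<le> - \<delta> * (S t - endemic_S)\<^sup>2 / S t"
      unfolding V'_def using t endemic_S_pos \<open>0 < endemic_E\<close> assms(1) pos eqs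
      by (intro endemic_lyapunov_derivative_le) auto
    show "0 \<le> V t"
      unfolding V_def using t endemic_S_pos \<open>0 < endemic_E\<close> assms(1) pos
      by (intro add_nonneg_nonneg mult_nonneg_nonneg volterra_nonneg) auto
  qed
  moreover from I_tendsto_if_S_tendsto[OF endemic_S_pos this]
  have "(I \<longlongrightarrow> endemic_I) at_top" by (simp add: endemic_I_def)
  moreover from E_tendsto_if_I_tendsto[OF this]
  have "(E \<longlongrightarrow> endemic_E) at_top" by (simp add: endemic_E_def)
  ultimately show ?thesis by (intro tendsto_Pair)
qed

lemma tendsto_disease_free_equilibrium:
  assumes "endemic_I \<le> 0" and "\<forall>\<^sub>F t in at_top. 0 < S t"
  shows "((\<lambda>t. (S t, E t, I t)) \<longlongrightarrow> (\<Lambda> / \<delta>, 0, 0)) at_top"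
proof -
  obtain T where "0 < T" and T: "\<And>t. T \<le> t \<Longrightarrow> 0 < S t"
    using eventually_at_top_positive_time[OF assms(2)] by blast
  define S0 where "S0 = \<Lambda> / \<delta>"
  have "0 < S0" "\<Lambda> = \<delta> * S0" using pos by (simp_all add: S0_def)
  have "\<Lambda> - \<delta> * endemic_S \<le> 0"
    using assms(1) mult_pos_pos[OF pos(2) endemic_S_pos] by (auto simp: endemic_I_def divide_le_0_iff)
  then have "S0 \<le> c * d / (\<sigma> * k)"
    using pos by (simp add: S0_def pos_divide_le_eq mult.commute flip: endemic_S_def)
  define V where "V t = volterra S0 (S t) + E t + c / \<sigma> * I t" for t
  define V' where "V' t = (1 - S0 / S t) * (\<Lambda> - k * S t * I t - \<delta> * S t)
      + (k * S t * I t - c * E t) + c / \<sigma> * (\<sigma> * E t - d * I t)" for t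
  have "(S \<longlongrightarrow> S0) at_top"
  proof (rule S_tendsto_if_lyapunov[OF \<open>0 < T\<close> T])
    fix t assume "T \<le> t"
    with T \<open>0 < T\<close> S_E_I_nonneg[of t] have t: "0 < t" "0 < S t" "0 \<le> E t" "0 \<le> I t" by auto
    show "(V has_real_derivative V' t) (at t)"
      unfolding V_def V'_def using t \<open>0 < S0\<close>
      by (intro DERIV_add DERIV_cmult has_real_derivative_volterra deriv_S_at deriv_E_at deriv_I_at)
    show "V' t \<le> - \<delta> * (S t - S0)\<^sup>2 / S t"
      unfolding V'_def using t pos \<open>\<Lambda> = \<delta> * S0\<close> \<open>S0 \<le> c * d / (\<sigma> * k)\<close>
      by (intro disease_free_lyapunov_derivative_le) auto
    show "0 \<le> V t"
      unfolding V_def using t \<open>0 < S0\<close> pos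
      by (intro add_nonneg_nonneg mult_nonneg_nonneg volterra_nonneg) auto
  qed
  moreover from I_tendsto_if_S_tendsto[OF \<open>0 < S0\<close> this]
  have "(I \<longlongrightarrow> 0) at_top" by (simp add: \<open>\<Lambda> = \<delta> * S0\<close>)
  moreover from E_tendsto_if_I_tendsto[OF this]
  have "(E \<longlongrightarrow> 0) at_top" by simp
  ultimately show ?thesis unfolding S0_def by (intro tendsto_Pair)
qed

end

lemma has_real_derivative_triple_components:
  fixes x :: "real \<Rightarrow> real \<times> real \<times> real"
  assumes "(x has_vector_derivative (a, b, c)) F"
  shows "((\<lambda>t. fst (x t)) has_real_derivative a) F"
    and "((\<lambda>t. fst (snd (x t))) has_real_derivative b) F"
    and "((\<lambda>t. snd (snd (x t))) has_real_derivative c) F"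
proof -
  note x = assms[unfolded has_vector_derivative_def]
  show "((\<lambda>t. fst (x t)) has_real_derivative a) F"
    unfolding has_field_derivative_def
    by (rule has_derivative_eq_rhs[OF has_derivative_fst[OF x]]) (auto simp: fun_eq_iff)
  show "((\<lambda>t. fst (snd (x t))) has_real_derivative b) F"
    unfolding has_field_derivative_def
    by (rule has_derivative_eq_rhs[OF has_derivative_fst[OF has_derivative_snd[OF x]]]) (auto simp: fun_eq_iff)
  show "((\<lambda>t. snd (snd (x t))) has_real_derivative c) F"
    unfolding has_field_derivative_def
    by (rule has_derivative_eq_rhs[OF has_derivative_snd[OF has_derivative_snd[OF x]]]) (auto simp: fun_eq_iff)
qed

lemma seir_solution_if_forward_solution:
  fixes N \<mu> \<beta> \<sigma> \<gamma> p \<rho> :: real and x :: "real \<Rightarrow> real \<times> real \<times> real"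
  assumes "0 < N" "0 < \<mu>" "0 < \<beta>" "0 < \<sigma>" "0 \<le> \<gamma>" "0 \<le> p" "\<rho> < 1"
    and "x 0 \<in> Omega N" and "forward_solution (seir_field N \<mu> \<beta> \<sigma> \<gamma> p \<rho>) x"
  shows "seir_solution (\<lambda>t. fst (x t)) (\<lambda>t. fst (snd (x t))) (\<lambda>t. snd (snd (x t)))
           (\<mu> * N) (\<beta> * (1 - \<rho>) / N) (p / N + \<mu>) (\<sigma> + \<mu>) (\<gamma> + \<mu>) \<sigma> \<mu> N"
proof
  fix t :: real assume "0 \<le> t"
  then have "(x has_vector_derivative seir_field N \<mu> \<beta> \<sigma> \<gamma> p \<rho> (x t)) (at t within {0..})"
    using assms(9) by (simp add: forward_solution_def)
  note components = has_real_derivative_triple_components[OF this[unfolded seir_field_def split_beta]]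
  show "((\<lambda>t. fst (x t)) has_real_derivative \<mu> * N - \<beta> * (1 - \<rho>) / N * fst (x t) * snd (snd (x t))
          - (p / N + \<mu>) * fst (x t)) (at t within {0..})"
    using components(1) by (simp add: algebra_simps)
  show "((\<lambda>t. fst (snd (x t))) has_real_derivative \<beta> * (1 - \<rho>) / N * fst (x t) * snd (snd (x t))
          - (\<sigma> + \<mu>) * fst (snd (x t))) (at t within {0..})"
    using components(2) .
  show "((\<lambda>t. snd (snd (x t))) has_real_derivative \<sigma> * fst (snd (x t)) - (\<gamma> + \<mu>) * snd (snd (x t)))
          (at t within {0..})"
    using components(3) .
qed (use assms in \<open>auto intro: add_pos_nonneg add_nonneg_pos\<close>)

lemma endemic_equilibrium_formulas:
  fixes B N \<sigma> c d \<mu> p :: real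
  assumes "N \<noteq> 0" "\<sigma> \<noteq> 0" "B \<noteq> 0" "c \<noteq> 0" "d \<noteq> 0"
  shows "c * d / (\<sigma> * (B / N)) = c * d * N / (\<sigma> * B)"
    and "(\<mu> * N - (p / N + \<mu>) * (c * d / (\<sigma> * (B / N)))) / (B / N * (c * d / (\<sigma> * (B / N))))
         = (\<mu> * N * \<sigma> * B - c * d * (p + \<mu> * N)) / (c * d * B)"
  using assms by (simp_all add: field_simps)

theorem mainTheorem11:
  fixes N \<mu> \<beta> \<sigma> \<gamma> p \<rho> :: real
    and x :: "real \<Rightarrow> real \<times> real \<times> real"
  assumes "N > 0" "\<mu> > 0" "\<beta> > 0" "\<sigma> > 0" "\<gamma> > 0" "p > 0"
    and "0 < \<rho>" "\<rho> < 1"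
    and "x 0 \<in> Omega N"
    and "forward_solution (seir_field N \<mu> \<beta> \<sigma> \<gamma> p \<rho>) x"
    and "omega_limit x \<subseteq> interior (Omega N)"
  shows "closed_orbit (seir_field N \<mu> \<beta> \<sigma> \<gamma> p \<rho>) (omega_limit x) \<or>
         omega_limit x =
           (let Ie = (\<mu> * N * \<sigma> * \<beta> * (1 - \<rho>) - (\<sigma> + \<mu>) * (\<gamma> + \<mu>) * (p + \<mu> * N))
                     / ((\<sigma> + \<mu>) * (\<gamma> + \<mu>) * \<beta> * (1 - \<rho>))
            in {((\<sigma> + \<mu>) * (\<gamma> + \<mu>) * N / (\<sigma> * \<beta> * (1 - \<rho>)),
                 (\<gamma> + \<mu>) / \<sigma> * Ie, Ie)})"
proof -
  interpret seir_solution "\<lambda>t. fst (x t)" "\<lambda>t. fst (snd (x t))" "\<lambda>t. snd (snd (x t))"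
    "\<mu> * N" "\<beta> * (1 - \<rho>) / N" "p / N + \<mu>" "\<sigma> + \<mu>" "\<gamma> + \<mu>" \<sigma> \<mu> N
    by (rule seir_solution_if_forward_solution) (use assms in auto)
  have positive: "\<forall>\<^sub>F t in at_top. 0 < fst (x t) \<and> 0 < fst (snd (x t)) \<and> 0 < snd (snd (x t))"
    using assms(11) by (intro eventually_positive_if_omega_limit_in_interior) simp
  show ?thesis
  proof (cases "0 < endemic_I")
    case True
    have "omega_limit x = {(endemic_S, endemic_E, endemic_I)}"
      using omega_limit_tendsto[OF tendsto_endemic_equilibrium[OF True positive]] by simp
    moreover have "endemic_S = (\<sigma> + \<mu>) * (\<gamma> + \<mu>) * N / (\<sigma> * (\<beta> * (1 - \<rho>)))"
      unfolding endemic_S_def using assms(1-8) by (intro endemic_equilibrium_formulas(1)) auto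
    moreover have "endemic_I = (\<mu> * N * \<sigma> * (\<beta> * (1 - \<rho>)) - (\<sigma> + \<mu>) * (\<gamma> + \<mu>) * (p + \<mu> * N))
                     / ((\<sigma> + \<mu>) * (\<gamma> + \<mu>) * (\<beta> * (1 - \<rho>)))"
      unfolding endemic_I_def endemic_S_def using assms(1-8) by (intro endemic_equilibrium_formulas(2)) auto
    ultimately show ?thesis by (simp add: Let_def endemic_E_def mult.assoc)
  next
    case False
    have "omega_limit x = {(\<mu> * N / (p / N + \<mu>), 0, 0)}"
      using omega_limit_tendsto[OF tendsto_disease_free_equilibrium[OF _ eventually_mono[OF positive]]] False
      by simp
    then have "(\<mu> * N / (p / N + \<mu>), 0, 0) \<in> interior (Omega N)" using assms(11) by blast
    then show ?thesis using interior_Omega_positive by blast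
  qed
qed

end
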